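(* Let $1 \leqslant k \leqslant n$ be integers. Let $\mathcal{C}$ be the set of all chains in $\{0,1\}^n$ of length exactly $k+1$, together with all symmetric chains in $\{0,1\}^n$ of length less than $k+1$ (chains, length and symmetry as defined in the context). Suppose there exist strictly positive real weights $w_\gamma > 0$, one for each $\gamma \in \mathcal{C}$, such that for every $x \in \{0,1\}^n$ $$\sum_{\gamma \in \mathcal{C} :\, x \in \gamma} w_\gamma = 1.$$ Call $A \subseteq \{0,1\}^n$ admissible if there are no two distinct $x, y \in A$ with $x_i \leqslant y_i$ for all $i$ and $x_i < y_i$ for at most $k$ coordinates $i$. Then: if $n$ is even, the set $B = \{x \in \{0,1\}^n : |x| \equiv \tfrac{n}{2} \pmod{k+1}\}$ is the unique admissible set of maximum cardinality; if $n$ is odd, the sets $B_1 = \{x : |x| \equiv \lfloor \tfrac{n}{2} \rfloor \pmod{k+1}\}$ and $B_2 = \{x : |x| \equiv \lceil \tfrac{n}{2} \rceil \pmod{k+1}\}$ are admissible sets of maximum cardinality and are the only ones.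
   Context: For $x \in \{0,1\}^n$, $|x|$ denotes the number of coordinates equal to $1$, and the layer $L_m$ is $\{x : |x| = m\}$. For $x, y \in \{0,1\}^n$ write $x \prec y$ if there is a coordinate $j$ with $x_i = y_i$ for all $i \neq j$, $x_j = 0$ and $y_j = 1$. A chain is an ordered tuple $(x_1, \dots, x_l)$ of elements of $\{0,1\}^n$ with $x_1 \prec x_2 \prec \dots \prec x_l$ (a single element is a chain); its length is $l$. If $x_1 \in L_m$ then $x_l \in L_{m+l-1}$, and the chain is called symmetric if $\frac{m + (m+l-1)}{2} = \frac{n}{2}$. Writing $x \in \gamma$ means $x$ is one of the entries of the chain $\gamma$. *)

theory Defs
  imports Complex_Main
begin

text \<open>Elements of {0,1}^n are bool lists of length n (True = coordinate 1).\<close>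

definition cube :: "nat \<Rightarrow> bool list set" where
  "cube n = {x. length x = n}"

definition weight :: "bool list \<Rightarrow> nat" where
  "weight x = length (filter id x)"

definition covers :: "bool list \<Rightarrow> bool list \<Rightarrow> bool" where
  "covers x y \<longleftrightarrow> length x = length y \<and>
     (\<exists>j < length x. \<not> x ! j \<and> y ! j \<and> (\<forall>i < length x. i \<noteq> j \<longrightarrow> x ! i = y ! i))"

text \<open>A chain in {0,1}^n: nonempty tuple x_1 \<prec> ... \<prec> x_l; its length is the length of the list.\<close>
definition is_chain :: "nat \<Rightarrow> bool list list \<Rightarrow> bool" where
  "is_chain n c \<longleftrightarrow> c \<noteq> [] \<and> set c \<subseteq> cube n \<and>
     (\<forall>i. Suc i < length c \<longrightarrow> covers (c ! i) (c ! Suc i))"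

text \<open>Symmetric: (m + (m + l - 1))/2 = n/2 with m = |x_1|, l = length.\<close>
definition symmetric_chain :: "nat \<Rightarrow> bool list list \<Rightarrow> bool" where
  "symmetric_chain n c \<longleftrightarrow> is_chain n c \<and>
     weight (hd c) + (weight (hd c) + length c - 1) = n"

definition chain_family :: "nat \<Rightarrow> nat \<Rightarrow> bool list list set" where
  "chain_family n k = {c. is_chain n c \<and> length c = k + 1}
                    \<union> {c. symmetric_chain n c \<and> length c < k + 1}"

definition admissible :: "nat \<Rightarrow> nat \<Rightarrow> bool list set \<Rightarrow> bool" where
  "admissible n k A \<longleftrightarrow> A \<subseteq> cube n \<and>
     \<not> (\<exists>x\<in>A. \<exists>y\<in>A. x \<noteq> y \<and> (\<forall>i<n. x ! i \<le> y ! i)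
            \<and> card {i. i < n \<and> x ! i < y ! i} \<le> k)"

end

theory Submission
  imports Defs
begin

text \<open>
  Double counting with the weights gives |A| = sum of w(c) |A \<inter> c| over the chains c, for
  every A \<subseteq> {0,1}^n. Two points of a chain of length at most k + 1 differ in at most k
  coordinates, so an admissible set meets every chain of the family at most once and |A| is at
  most the total weight. A union of layers whose weights are congruent mod k + 1 to a middle
  weight u meets every chain of length k + 1 and every shorter symmetric chain (whose weight
  range contains u) exactly once, so it attains the bound.

  Conversely, since all weights are positive, a maximum admissible set A meets every chain of
  the family exactly once. If x has a 1 at i and a 0 at j, then x and x' = x[i:=0, j:=1]
  complete the same chain of length k + 1 through x[i:=0] and x[j:=1], so x \<in> A iff x' \<in> A;
  hence membership in A depends only on |x|. Any k + 1 consecutive layers then contain exactly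
  one layer of A, so A consists of the layers with a fixed residue mod k + 1, and the shortest
  symmetric chain, which lives in the middle layers, pins down that residue.
\<close>

section \<open>Weight and the covering relation\<close>

lemma weight_eq_card: "weight x = card {i. i < length x \<and> x ! i}"
  unfolding weight_def by (simp add: length_filter_conv_card)

lemma weight_le_length: "weight x \<le> length x"
  unfolding weight_def by simp

lemma finite_cube: "finite (cube n)"
proof -
  have "cube n = {xs. set xs \<subseteq> UNIV \<and> length xs = n}"
    by (auto simp: cube_def)
  then show ?thesis
    using finite_lists_length_eq[of "UNIV :: bool set" n] by simp
qed

lemma ex_cube_weight: "u \<le> n \<Longrightarrow> \<exists>x\<in>cube n. weight x = u"
  by (intro bexI[of _ "replicate u True @ replicate (n - u) False"])
     (simp_all add: cube_def weight_def)

lemma ex_nth_False: "weight x < length x \<Longrightarrow> \<exists>j<length x. \<not> x ! j"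
  unfolding weight_def by (metis filter_True id_apply in_set_conv_nth less_irrefl)

lemma ex_nth_True: "0 < weight x \<Longrightarrow> \<exists>j<length x. x ! j"
  unfolding weight_def by (metis filter_False id_apply in_set_conv_nth length_0_conv less_irrefl)

lemma covers_length: "covers x y \<Longrightarrow> length x = length y"
  unfolding covers_def by blast

lemma covers_nth_le: "covers x y \<Longrightarrow> i < length x \<Longrightarrow> x ! i \<le> y ! i"
  unfolding covers_def by (metis le_boolI)

lemma covers_weight:
  assumes "covers x y"
  shows "weight y = Suc (weight x)"
proof -
  obtain j where j: "j < length x" "\<not> x ! j" "y ! j" "\<forall>i<length x. i \<noteq> j \<longrightarrow> x ! i = y ! i"
    and "length x = length y"
    using assms unfolding covers_def by blast
  then have "{i. i < length y \<and> y ! i} = insert j {i. i < length x \<and> x ! i}"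
    by auto
  then show ?thesis
    using j by (simp add: weight_eq_card)
qed

lemma covers_update_True: "j < length x \<Longrightarrow> \<not> x ! j \<Longrightarrow> covers x (x[j := True])"
  unfolding covers_def by auto

lemma covers_update_False: "j < length x \<Longrightarrow> x ! j \<Longrightarrow> covers (x[j := False]) x"
  unfolding covers_def by auto

lemma weight_pointwise_le:
  assumes "length x = length y" "\<forall>i<length x. x ! i \<le> y ! i"
  shows "weight y = weight x + card {i. i < length x \<and> x ! i < y ! i}"
proof -
  have "{i. i < length y \<and> y ! i} = {i. i < length x \<and> x ! i} \<union> {i. i < length x \<and> x ! i < y ! i}"
    using assms by auto
  moreover have "{i. i < length x \<and> x ! i} \<inter> {i. i < length x \<and> x ! i < y ! i} = {}"
    by auto
  ultimately show ?thesis
    by (simp add: weight_eq_card card_Un_disjoint)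
qed

lemma eq_if_pointwise_le_weight_eq:
  assumes "length x = length y" "\<forall>i<length x. x ! i \<le> y ! i" "weight x = weight y"
  shows "x = y"
proof -
  have "{i. i < length x \<and> x ! i < y ! i} = {}"
    using weight_pointwise_le[OF assms(1,2)] assms(3) by simp
  then have "\<forall>i<length x. x ! i = y ! i"
    using assms(2) by (auto simp: less_bool_def le_bool_def)
  then show ?thesis
    using assms(1) by (simp add: nth_equalityI)
qed

section \<open>Chains\<close>

lemma is_chain_iff: "is_chain n c \<longleftrightarrow> c \<noteq> [] \<and> set c \<subseteq> cube n \<and> successively covers c"
  unfolding is_chain_def successively_conv_nth ..

lemma chain_nth_in_cube: "is_chain n c \<Longrightarrow> i < length c \<Longrightarrow> c ! i \<in> cube n"
  unfolding is_chain_iff by (meson nth_mem subsetD)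

lemma chain_nth_weight:
  "is_chain n c \<Longrightarrow> i < length c \<Longrightarrow> weight (c ! i) = weight (hd c) + i"
proof (induction i)
  case 0
  then show ?case by (simp add: is_chain_def hd_conv_nth)
next
  case (Suc i)
  then show ?case
    using covers_weight unfolding is_chain_def by fastforce
qed

lemma distinct_chain: "is_chain n c \<Longrightarrow> distinct c"
  by (auto simp: distinct_conv_nth chain_nth_weight dest: arg_cong[where f = weight])

lemma inj_on_weight_chain: "is_chain n c \<Longrightarrow> inj_on weight (set c)"
  by (auto simp: inj_on_def in_set_conv_nth chain_nth_weight)

lemma weight_image_chain:
  assumes "is_chain n c"
  shows "weight ` set c = {weight (hd c)..<weight (hd c) + length c}"
proof -
  have "weight ` set c = (\<lambda>i. weight (hd c) + i) ` {..<length c}"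
    by (force simp: in_set_conv_nth chain_nth_weight[OF assms] image_iff)
  then show ?thesis
    by (simp add: lessThan_atLeast0 add.commute)
qed

lemma card_weight_class_Int_chain:
  assumes "is_chain n c"
  shows "card ({x \<in> cube n. weight x \<in> R} \<inter> set c)
           = card (R \<inter> {weight (hd c)..<weight (hd c) + length c})"
proof -
  have "set c \<subseteq> cube n"
    using assms by (simp add: is_chain_iff)
  then have "weight ` ({x \<in> cube n. weight x \<in> R} \<inter> set c) = R \<inter> weight ` set c"
    by auto
  moreover have "inj_on weight ({x \<in> cube n. weight x \<in> R} \<inter> set c)"
    using inj_on_weight_chain[OF assms] by (rule inj_on_subset) auto
  ultimately show ?thesis
    by (metis card_image weight_image_chain[OF assms])
qed

lemma chain_nth_le:
  assumes "is_chain n c" "i \<le> j" "j < length c" "l < n"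
  shows "c ! i ! l \<le> c ! j ! l"
  using assms(2,3)
proof (induction j)
  case (Suc j)
  show ?case
  proof (cases "i = Suc j")
    case False
    have "covers (c ! j) (c ! Suc j)" "length (c ! j) = n"
      using assms(1) Suc.prems chain_nth_in_cube[OF assms(1), of j]
      by (auto simp: is_chain_def cube_def)
    have "c ! i ! l \<le> c ! j ! l"
      using Suc False by simp
    also have "\<dots> \<le> c ! Suc j ! l"
      using covers_nth_le \<open>covers (c ! j) (c ! Suc j)\<close> \<open>length (c ! j) = n\<close> assms(4) by simp
    finally show ?thesis .
  qed simp
qed simp

lemma chain_family_is_chain: "c \<in> chain_family n k \<Longrightarrow> is_chain n c"
  by (auto simp: chain_family_def symmetric_chain_def)

lemma chain_family_length_le: "c \<in> chain_family n k \<Longrightarrow> length c \<le> k + 1"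
  unfolding chain_family_def by auto

lemma symmetric_chain_in_chain_family:
  "symmetric_chain n c \<Longrightarrow> length c \<le> k + 1 \<Longrightarrow> c \<in> chain_family n k"
  by (auto simp: chain_family_def symmetric_chain_def)

lemma finite_chain_family: "finite (chain_family n k)"
proof -
  have "chain_family n k \<subseteq> {c. set c \<subseteq> cube n \<and> length c \<le> k + 1}"
    by (auto simp: chain_family_def symmetric_chain_def is_chain_def)
  then show ?thesis
    using finite_lists_length_le[OF finite_cube] finite_subset by blast
qed

lemma chain_above:
  "x \<in> cube n \<Longrightarrow> weight x + m \<le> n
     \<Longrightarrow> \<exists>U. length U = m \<and> set U \<subseteq> cube n \<and> successively covers (x # U)"
proof (induction m arbitrary: x)
  case 0
  then show ?case by simp
next
  case (Suc m)
  then obtain j where j: "j < length x" "\<not> x ! j"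
    using ex_nth_False[of x] by (auto simp: cube_def)
  then have cov: "covers x (x[j := True])"
    by (rule covers_update_True)
  moreover have "x[j := True] \<in> cube n" "weight (x[j := True]) + m \<le> n"
    using Suc.prems covers_weight[OF cov] by (auto simp: cube_def)
  ultimately obtain U where "length U = m" "set U \<subseteq> cube n"
      "successively covers (x[j := True] # U)"
    using Suc.IH by blast
  then show ?case
    using cov \<open>x[j := True] \<in> cube n\<close>
    by (intro exI[of _ "x[j := True] # U"]) simp
qed

lemma chain_below:
  "x \<in> cube n \<Longrightarrow> m \<le> weight x
     \<Longrightarrow> \<exists>D. length D = m \<and> set D \<subseteq> cube n \<and> successively covers (D @ [x])"
proof (induction m arbitrary: x)
  case 0
  then show ?case by simp
next
  case (Suc m)
  then obtain j where j: "j < length x" "x ! j"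
    using ex_nth_True[of x] by auto
  then have cov: "covers (x[j := False]) x"
    by (rule covers_update_False)
  moreover have "x[j := False] \<in> cube n" "m \<le> weight (x[j := False])"
    using Suc.prems covers_weight[OF cov] by (auto simp: cube_def)
  ultimately obtain D where "length D = m" "set D \<subseteq> cube n"
      "successively covers (D @ [x[j := False]])"
    using Suc.IH by blast
  then show ?case
    using cov \<open>x[j := False] \<in> cube n\<close> successively_append_iff[of covers "D @ [x[j := False]]" "[x]"]
    by (intro exI[of _ "D @ [x[j := False]]"]) simp
qed

lemma is_chain_glue:
  assumes "set D \<subseteq> cube n" "set U \<subseteq> cube n" "z \<in> cube n"
    and "successively covers (D @ [z])" "successively covers (z # U)"
  shows "is_chain n (D @ z # U)"
  using assms successively_append_iff[of covers "D @ [z]" U]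
  by (auto simp: is_chain_iff successively_Cons)

lemma chains_through_diamond:
  assumes "1 \<le> k" "k \<le> n" "b \<in> cube n" "covers b a" "covers a t"
  obtains D U where "length D + length U = k"
    and "\<And>z. covers b z \<Longrightarrow> covers z t \<Longrightarrow> is_chain n (D @ z # U)"
proof -
  have wa: "weight a = Suc (weight b)" and wt: "weight t = Suc (weight a)"
    using assms(4,5) by (simp_all add: covers_weight)
  have t: "t \<in> cube n"
    using assms(3-5) by (simp add: cube_def covers_length)
  have z: "z \<in> cube n" if "covers b z" for z
    using assms(3) that by (simp add: cube_def covers_length)
  show thesis
  proof (cases "k \<le> weight a")
    case True
    then have "k - 1 \<le> weight b"
      using wa by simp
    then obtain D where D: "length D = k - 1" "set D \<subseteq> cube n" "successively covers (D @ [b])"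
      using chain_below[OF assms(3)] by blast
    have "is_chain n ((D @ [b]) @ z # [])" if "covers b z" for z
      using D assms(3) z[OF that] that
      by (intro is_chain_glue) (auto simp: successively_append_iff)
    then show thesis
      using that[of "D @ [b]" "[]"] D assms(1) by simp
  next
    case False
    then obtain D where D: "length D = weight b" "set D \<subseteq> cube n" "successively covers (D @ [b])"
      using chain_below[OF assms(3), of "weight b"] by auto
    obtain U where U: "length U = k - Suc (weight a)" "set U \<subseteq> cube n" "successively covers (t # U)"
      using chain_above[OF t, of "k - Suc (weight a)"] False wt assms(2) by auto
    have "is_chain n ((D @ [b]) @ z # t # U)" if "covers b z" "covers z t" for z
      using D U assms(3) t z that
      by (intro is_chain_glue) (auto simp: successively_append_iff)
    then show thesis
      using that[of "D @ [b]" "t # U"] D U False wa by simp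
  qed
qed

lemma div_two_add_succ_div_two: "n div 2 + (n + 1) div 2 = (n :: nat)"
  by presburger

lemma succ_div_two_le: "(n + 1) div 2 \<le> n div 2 + (1 :: nat)"
  by presburger

lemma ex_middle_symmetric_chain:
  "\<exists>c. symmetric_chain n c \<and> weight (hd c) = n div 2 \<and> length c \<le> 2"
proof -
  obtain x where x: "x \<in> cube n" "weight x = n div 2"
    using ex_cube_weight[of "n div 2" n] by auto
  moreover have "weight x + ((n + 1) div 2 - n div 2) \<le> n"
    using x div_two_add_succ_div_two[of n] by simp
  ultimately obtain U where U: "length U = (n + 1) div 2 - n div 2" "set U \<subseteq> cube n"
      "successively covers (x # U)"
    using chain_above by blast
  then have "symmetric_chain n (x # U)"
    using x div_two_add_succ_div_two[of n] by (simp add: symmetric_chain_def is_chain_iff)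
  moreover have "length (x # U) \<le> 2"
    using U(1) succ_div_two_le[of n] by simp
  ultimately show ?thesis
    using x by auto
qed

section \<open>Residues in intervals\<close>

lemma mod_eq_imp_eq_nat:
  fixes a b m :: nat
  assumes "a \<le> b" "b < a + m" "a mod m = b mod m"
  shows "a = b"
proof -
  have "m dvd b - a"
    using mod_eq_dvd_iff_nat[of a b m] assms(1,3) by simp
  moreover have "b - a < m"
    using assms(1,2) by simp
  ultimately have "\<not> 0 < b - a"
    using nat_dvd_not_less by blast
  then show ?thesis
    using assms(1) by simp
qed

lemma card_mod_class_Int_interval:
  fixes m :: nat
  assumes "L \<le> m" "u \<in> {h..<h + L}" "u mod m = r"
  shows "card ({v. v mod m = r} \<inter> {h..<h + L}) = 1"
proof -
  have "v = u" if v: "v \<in> {h..<h + L}" "v mod m = r" for v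
  proof (cases "u \<le> v")
    case True
    moreover have "v < u + m"
      using v(1) assms(1,2) by simp
    ultimately show ?thesis
      using mod_eq_imp_eq_nat[of u v m] v(2) assms(3) by simp
  next
    case False
    moreover have "u < v + m"
      using v(1) assms(1,2) by simp
    ultimately show ?thesis
      using mod_eq_imp_eq_nat[of v u m] v(2) assms(3) by simp
  qed
  then have "{v. v mod m = r} \<inter> {h..<h + L} = {u}"
    using assms(2,3) by blast
  then show ?thesis
    by simp
qed

lemma ex_mod_eq_in_interval:
  fixes m :: nat
  assumes "0 < m"
  shows "\<exists>u\<in>{h..<h + m}. u mod m = r mod m"
proof
  let ?i = "(r + (m - 1) * h) mod m"
  have "(h + ?i) mod m = (h + (r + (m - 1) * h)) mod m"
    by (simp add: mod_add_right_eq)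
  also have "h + (r + (m - 1) * h) = r + m * h"
    using assms by (cases m) (simp_all add: algebra_simps)
  finally show "(h + ?i) mod m = r mod m"
    by simp
  show "h + ?i \<in> {h..<h + m}"
    using assms by simp
qed

lemma periodic_if_one_per_window:
  fixes R :: "nat set"
  assumes "k \<le> n" and window: "\<And>s. s + k \<le> n \<Longrightarrow> card (R \<inter> {s..s + k}) = 1"
  shows "\<exists>r\<le>k. \<forall>v\<le>n. v \<in> R \<longleftrightarrow> v mod (k + 1) = r"
proof -
  have shift: "s \<in> R \<longleftrightarrow> s + (k + 1) \<in> R" if "s + (k + 1) \<le> n" for s
  proof -
    let ?M = "R \<inter> {Suc s..s + k}"
    have "{s..s + k} = insert s {Suc s..s + k}" "{Suc s..Suc s + k} = insert (s + (k + 1)) {Suc s..s + k}"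
      by auto
    then have "R \<inter> {s..s + k} = (if s \<in> R then insert s ?M else ?M)"
      "R \<inter> {Suc s..Suc s + k} = (if s + (k + 1) \<in> R then insert (s + (k + 1)) ?M else ?M)"
      by auto
    moreover have "card (R \<inter> {s..s + k}) = 1" "card (R \<inter> {Suc s..Suc s + k}) = 1"
      using window[of s] window[of "Suc s"] that by simp_all
    ultimately show ?thesis
      by (auto split: if_splits)
  qed
  have periodic: "v \<in> R \<longleftrightarrow> v mod (k + 1) \<in> R" if "v \<le> n" for v
    using that
  proof (induction v rule: less_induct)
    case (less v)
    show ?case
    proof (cases "v < k + 1")
      case False
      then have "v - (k + 1) \<in> R \<longleftrightarrow> v \<in> R"
        using shift[of "v - (k + 1)"] less.prems by simp
      then show ?thesis
        using less.IH[of "v - (k + 1)"] less.prems False by (simp add: le_mod_geq)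
    qed simp
  qed
  obtain r where r: "R \<inter> {0..k} = {r}"
    using window[of 0] assms(1) by (auto simp: card_1_singleton_iff)
  have "v \<in> R \<longleftrightarrow> v mod (k + 1) = r" if "v \<le> n" for v
  proof -
    have "v mod (k + 1) \<in> {0..k}"
      by (simp add: less_Suc_eq_le)
    then show ?thesis
      using periodic[OF that] r by blast
  qed
  moreover have "r \<le> k"
    using r by auto
  ultimately show ?thesis
    by blast
qed

lemma middle_weight_in_symmetric_range:
  fixes h L n u :: nat
  assumes "h + (h + L - 1) = n" "1 \<le> L" "n div 2 \<le> u" "u \<le> (n + 1) div 2"
  shows "u \<in> {h..<h + L}"
proof -
  have "2 * h \<le> n" "n + 1 < 2 * h + 2 * L"
    using assms(1,2) by linarith+
  moreover have "2 * (n div 2) \<le> n" "2 * ((n + 1) div 2) \<le> n + 1"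
    by simp_all
  ultimately show ?thesis
    using assms(3,4) by auto
qed

section \<open>Admissible sets and transversals of the chain family\<close>

definition residue_layers :: "nat \<Rightarrow> nat \<Rightarrow> nat \<Rightarrow> bool list set" where
  "residue_layers n m r = {x \<in> cube n. weight x mod m = r}"

definition transversal :: "'a set \<Rightarrow> 'a list set \<Rightarrow> bool" where
  "transversal A C \<longleftrightarrow> (\<forall>c\<in>C. card (A \<inter> set c) = 1)"

lemma admissible_card_Int_chain_le:
  assumes A: "admissible n k A" and c: "is_chain n c" "length c \<le> k + 1"
  shows "card (A \<inter> set c) \<le> 1"
proof -
  have no_pair: False if ij: "i < j" "j < length c" "c ! i \<in> A" "c ! j \<in> A" for i j
  proof -
    have le: "\<forall>l<n. c ! i ! l \<le> c ! j ! l"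
      using chain_nth_le[OF c(1), of i j] ij by simp
    have "length (c ! i) = n" "length (c ! j) = n"
      using chain_nth_in_cube[OF c(1)] ij by (auto simp: cube_def)
    then have "weight (c ! j) = weight (c ! i) + card {l. l < n \<and> c ! i ! l < c ! j ! l}"
      using weight_pointwise_le[of "c ! i" "c ! j"] le by simp
    then have "card {l. l < n \<and> c ! i ! l < c ! j ! l} \<le> k"
      using chain_nth_weight[OF c(1)] ij c(2) by simp
    moreover have "c ! i \<noteq> c ! j"
      using distinct_chain[OF c(1)] ij by (simp add: nth_eq_iff_index_eq)
    ultimately show False
      using A ij le unfolding admissible_def by blast
  qed
  have "x = y" if xy: "x \<in> A \<inter> set c" "y \<in> A \<inter> set c" for x y
  proof -
    obtain i j where "i < length c" "j < length c" "x = c ! i" "y = c ! j" "c ! i \<in> A" "c ! j \<in> A"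
      using xy by (auto simp: in_set_conv_nth)
    then show ?thesis
      using no_pair[of i j] no_pair[of j i] by (cases i j rule: linorder_cases) auto
  qed
  then show ?thesis
    by (simp add: card_le_Suc0_iff_eq)
qed

lemma residue_layers_admissible: "admissible n k (residue_layers n (k + 1) r)"
  unfolding admissible_def
proof (intro conjI notI)
  show "residue_layers n (k + 1) r \<subseteq> cube n"
    by (auto simp: residue_layers_def)
next
  assume "\<exists>x\<in>residue_layers n (k + 1) r. \<exists>y\<in>residue_layers n (k + 1) r. x \<noteq> y \<and>
    (\<forall>i<n. x ! i \<le> y ! i) \<and> card {i. i < n \<and> x ! i < y ! i} \<le> k"
  then obtain x y where xy: "x \<in> cube n" "y \<in> cube n" "weight x mod (k + 1) = weight y mod (k + 1)"
    "x \<noteq> y" "\<forall>i<n. x ! i \<le> y ! i" "card {i. i < n \<and> x ! i < y ! i} \<le> k"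
    by (auto simp: residue_layers_def)
  define d where "d = card {i. i < n \<and> x ! i < y ! i}"
  have len: "length x = n" "length y = n"
    using xy by (auto simp: cube_def)
  then have w: "weight y = weight x + d"
    using weight_pointwise_le[of x y] xy(5) by (simp add: d_def)
  then have "d \<noteq> 0"
    using eq_if_pointwise_le_weight_eq[of x y] len xy(4,5) by auto
  moreover have "(k + 1) dvd d"
    using mod_eq_dvd_iff_nat[of "weight x" "weight y" "k + 1"] xy(3) w by simp
  ultimately have "k + 1 \<le> d"
    by (simp add: dvd_imp_le)
  then show False
    using xy(6) d_def by simp
qed

lemma residue_layers_transversal:
  assumes "n div 2 \<le> u" "u \<le> (n + 1) div 2"
  shows "transversal (residue_layers n (k + 1) (u mod (k + 1))) (chain_family n k)"
  unfolding transversal_def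
proof
  fix c
  assume c: "c \<in> chain_family n k"
  then have chain: "is_chain n c" and len: "length c \<le> k + 1"
    by (rule chain_family_is_chain, rule chain_family_length_le)
  define h where "h = weight (hd c)"
  have "\<exists>u'\<in>{h..<h + length c}. u' mod (k + 1) = u mod (k + 1)"
  proof (cases "length c = k + 1")
    case True
    then show ?thesis
      using ex_mod_eq_in_interval[of "k + 1" h u] by simp
  next
    case False
    then have "h + (h + length c - 1) = n" "1 \<le> length c"
      using c by (auto simp: chain_family_def symmetric_chain_def is_chain_def h_def Suc_le_eq)
    then have "u \<in> {h..<h + length c}"
      using middle_weight_in_symmetric_range assms by blast
    then show ?thesis
      by blast
  qed
  then obtain u' where "u' \<in> {h..<h + length c}" "u' mod (k + 1) = u mod (k + 1)"
    by blast
  then have "card ({v. v mod (k + 1) = u mod (k + 1)} \<inter> {h..<h + length c}) = 1"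
    using card_mod_class_Int_interval[OF len] by blast
  moreover have "residue_layers n (k + 1) (u mod (k + 1))
      = {x \<in> cube n. weight x \<in> {v. v mod (k + 1) = u mod (k + 1)}}"
    by (simp add: residue_layers_def)
  ultimately show "card (residue_layers n (k + 1) (u mod (k + 1)) \<inter> set c) = 1"
    using card_weight_class_Int_chain[OF chain, of "{v. v mod (k + 1) = u mod (k + 1)}"]
    by (simp only: h_def)
qed

lemma transversal_swap:
  assumes A: "transversal A (chain_family n k)" and "1 \<le> k" "k \<le> n"
    and x: "x \<in> cube n" "i < n" "j < n" "x ! i" "\<not> x ! j"
  shows "x \<in> A \<longleftrightarrow> x[i := False, j := True] \<in> A"
proof -
  define x' where "x' = x[i := False, j := True]"
  have "i \<noteq> j" "length x = n"
    using x by (auto simp: cube_def)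
  have "x'[i := True] = x[j := True]"
    using x \<open>length x = n\<close> by (intro nth_equalityI) (auto simp: x'_def nth_list_update)
  then have covs: "covers (x[i := False]) x" "covers x (x[j := True])"
      "covers (x[i := False]) x'" "covers x' (x[j := True])"
    using x \<open>i \<noteq> j\<close> \<open>length x = n\<close> covers_update_True[of i x'] unfolding x'_def
    by (auto intro!: covers_update_True covers_update_False)
  obtain D U where len: "length D + length U = k"
    and chain: "\<And>z. covers (x[i := False]) z \<Longrightarrow> covers z (x[j := True]) \<Longrightarrow> is_chain n (D @ z # U)"
    using chains_through_diamond[OF assms(2,3) _ covs(1,2)] \<open>length x = n\<close>
    by (auto simp: cube_def)
  have "z \<in> A \<longleftrightarrow> card (A \<inter> (set D \<union> set U)) = 0"
    if "covers (x[i := False]) z" "covers z (x[j := True])" for z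
  proof -
    have c: "is_chain n (D @ z # U)"
      using chain that by blast
    then have "D @ z # U \<in> chain_family n k"
      using len by (simp add: chain_family_def)
    then have "card (A \<inter> set (D @ z # U)) = 1"
      using A unfolding transversal_def by blast
    moreover have "z \<notin> set D \<union> set U"
      using distinct_chain[OF c] by simp
    ultimately show ?thesis
      by (auto simp: Int_insert_right card_insert_if split: if_splits)
  qed
  then show ?thesis
    using covs unfolding x'_def by blast
qed

lemma transversal_weight_invariant:
  assumes A: "transversal A (chain_family n k)" and k: "1 \<le> k" "k \<le> n"
  shows "x \<in> cube n \<Longrightarrow> y \<in> cube n \<Longrightarrow> weight x = weight y \<Longrightarrow> x \<in> A \<longleftrightarrow> y \<in> A"
proof (induction "card {l. l < n \<and> x ! l \<and> \<not> y ! l}" arbitrary: x)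
  case 0
  then have "\<forall>l<length x. x ! l \<le> y ! l" "length x = length y"
    by (auto simp: cube_def)
  then show ?case
    using eq_if_pointwise_le_weight_eq 0 by blast
next
  case (Suc d)
  have len: "length x = n" "length y = n"
    using Suc.prems by (auto simp: cube_def)
  have "{l. l < n \<and> x ! l \<and> \<not> y ! l} \<noteq> {}"
    using Suc.hyps(2) by (metis card.empty nat.distinct(1))
  then obtain i where i: "i < n" "x ! i" "\<not> y ! i"
    by blast
  obtain j where j: "j < n" "\<not> x ! j" "y ! j"
  proof (rule ccontr)
    assume "\<not> thesis"
    then have "\<forall>l<length y. y ! l \<le> x ! l"
      using that len by (auto simp: le_bool_def)
    then have "y = x"
      using eq_if_pointwise_le_weight_eq[of y x] len Suc.prems(3) by simp
    then show False
      using i by simp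
  qed
  define x' where "x' = x[i := False, j := True]"
  have "i \<noteq> j"
    using i j by auto
  then have "covers (x[i := False]) x" "covers (x[i := False]) x'"
    using i j len by (auto simp: x'_def nth_list_update intro!: covers_update_False covers_update_True)
  then have "weight x' = weight y"
    using Suc.prems(3) by (simp add: covers_weight)
  moreover have "x' \<in> cube n"
    using len by (simp add: x'_def cube_def)
  moreover have "{l. l < n \<and> x' ! l \<and> \<not> y ! l} = {l. l < n \<and> x ! l \<and> \<not> y ! l} - {i}"
    using i j len by (auto simp: x'_def nth_list_update)
  then have "d = card {l. l < n \<and> x' ! l \<and> \<not> y ! l}"
    using Suc.hyps(2) i by simp
  ultimately have "x' \<in> A \<longleftrightarrow> y \<in> A"
    using Suc.hyps(1) Suc.prems(2) by blast
  moreover have "x \<in> A \<longleftrightarrow> x' \<in> A"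
    unfolding x'_def using transversal_swap[OF A k Suc.prems(1) i(1) j(1) i(2) j(2)] .
  ultimately show ?case
    by simp
qed

lemma transversal_eq_residue_layers:
  assumes A: "transversal A (chain_family n k)" "A \<subseteq> cube n" and k: "1 \<le> k" "k \<le> n"
  shows "\<exists>r. A = residue_layers n (k + 1) r"
proof -
  define R where "R = weight ` A"
  have A_eq: "A = {x \<in> cube n. weight x \<in> R}"
    using transversal_weight_invariant[OF A(1) k] A(2) unfolding R_def by blast
  have "card (R \<inter> {s..s + k}) = 1" if s: "s + k \<le> n" for s
  proof -
    have "s \<le> n"
      using s by simp
    then obtain x where x: "x \<in> cube n" "weight x = s"
      using ex_cube_weight by blast
    then obtain U where U: "length U = k" "set U \<subseteq> cube n" "successively covers (x # U)"
      using chain_above[OF x(1), of k] s by auto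
    then have c: "is_chain n (x # U)"
      using x by (simp add: is_chain_iff)
    then have "x # U \<in> chain_family n k"
      using U by (simp add: chain_family_def)
    then have "card (A \<inter> set (x # U)) = 1"
      using A(1) unfolding transversal_def by blast
    then show ?thesis
      using card_weight_class_Int_chain[OF c, of R] A_eq x U
      by (simp add: atLeastLessThanSuc_atLeastAtMost)
  qed
  then obtain r where r: "\<forall>v\<le>n. v \<in> R \<longleftrightarrow> v mod (k + 1) = r"
    using periodic_if_one_per_window[OF k(2)] by blast
  have "weight x \<le> n" if "x \<in> cube n" for x
    using that weight_le_length[of x] by (simp add: cube_def)
  then have "A = residue_layers n (k + 1) r"
    using r unfolding A_eq residue_layers_def by blast
  then show ?thesis ..
qed

lemma residue_of_transversal_residue_layers:
  assumes "1 \<le> k" and B: "transversal (residue_layers n (k + 1) r) (chain_family n k)"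
  shows "\<exists>u. n div 2 \<le> u \<and> u \<le> (n + 1) div 2 \<and> r = u mod (k + 1)"
proof -
  obtain c where c: "symmetric_chain n c" "weight (hd c) = n div 2" "length c \<le> 2"
    using ex_middle_symmetric_chain by blast
  then have chain: "is_chain n c" and "n div 2 + (n div 2 + length c - 1) = n"
    by (simp_all add: symmetric_chain_def)
  then have top: "n div 2 + length c = (n + 1) div 2 + 1"
    using div_two_add_succ_div_two[of n] chain by (cases c) (simp_all add: is_chain_def)
  have "c \<in> chain_family n k"
    using c assms(1) by (intro symmetric_chain_in_chain_family) simp_all
  then have "card (residue_layers n (k + 1) r \<inter> set c) = 1"
    using B unfolding transversal_def by blast
  then obtain x where x: "x \<in> set c" "weight x mod (k + 1) = r"
    by (auto simp: residue_layers_def card_1_singleton_iff)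
  then have "weight x \<in> weight ` set c"
    by simp
  then have "weight x \<in> {n div 2..<(n + 1) div 2 + 1}"
    using weight_image_chain[OF chain] c(2) top by simp
  then show ?thesis
    using x(2) by (intro exI[of _ "weight x"]) auto
qed

section \<open>The weighted counting bound\<close>

locale fractional_chain_partition =
  fixes n k :: nat and w :: "bool list list \<Rightarrow> real"
  assumes w_pos: "c \<in> chain_family n k \<Longrightarrow> 0 < w c"
    and w_cover: "x \<in> cube n \<Longrightarrow> (\<Sum>c\<in>{c \<in> chain_family n k. x \<in> set c}. w c) = 1"
begin

definition w_total :: real where
  "w_total = (\<Sum>c\<in>chain_family n k. w c)"

lemma card_eq_weighted_sum:
  assumes "A \<subseteq> cube n"
  shows "real (card A) = (\<Sum>c\<in>chain_family n k. w c * card (A \<inter> set c))"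
proof -
  have "finite A"
    using assms finite_cube finite_subset by blast
  have "real (card A) = (\<Sum>x\<in>A. \<Sum>c\<in>{c \<in> chain_family n k. x \<in> set c}. w c)"
    using assms w_cover by (simp add: subset_iff)
  also have "\<dots> = (\<Sum>c\<in>chain_family n k. \<Sum>x\<in>{x \<in> A. x \<in> set c}. w c)"
    using \<open>finite A\<close> finite_chain_family by (rule sum.swap_restrict)
  also have "\<dots> = (\<Sum>c\<in>chain_family n k. w c * card (A \<inter> set c))"
    by (simp add: Int_def mult.commute)
  finally show ?thesis .
qed

lemma admissible_card_le:
  assumes "admissible n k A"
  shows "real (card A) \<le> w_total"
proof -
  have "real (card A) = (\<Sum>c\<in>chain_family n k. w c * card (A \<inter> set c))"
    using assms by (simp add: admissible_def card_eq_weighted_sum)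
  also have "\<dots> \<le> (\<Sum>c\<in>chain_family n k. w c)"
  proof (rule sum_mono)
    fix c
    assume c: "c \<in> chain_family n k"
    then have "card (A \<inter> set c) \<le> 1"
      using admissible_card_Int_chain_le[OF assms chain_family_is_chain chain_family_length_le] by blast
    then show "w c * card (A \<inter> set c) \<le> w c"
      using w_pos[OF c] by (simp add: mult_le_cancel_left1)
  qed
  finally show ?thesis
    by (simp add: w_total_def)
qed

lemma transversal_card:
  assumes "transversal A (chain_family n k)" "A \<subseteq> cube n"
  shows "real (card A) = w_total"
  using assms by (simp add: card_eq_weighted_sum transversal_def w_total_def)

lemma transversal_if_admissible_card_eq:
  assumes A: "admissible n k A" and card: "real (card A) = w_total"
  shows "transversal A (chain_family n k)"
proof -
  let ?slack = "\<lambda>c. w c * (1 - real (card (A \<inter> set c)))"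
  have "(\<Sum>c\<in>chain_family n k. ?slack c)
      = (\<Sum>c\<in>chain_family n k. w c) - (\<Sum>c\<in>chain_family n k. w c * real (card (A \<inter> set c)))"
    by (simp add: right_diff_distrib sum_subtractf)
  also have "\<dots> = 0"
    using A card by (simp add: admissible_def card_eq_weighted_sum w_total_def)
  finally have sum_zero: "(\<Sum>c\<in>chain_family n k. ?slack c) = 0" .
  have "0 \<le> ?slack c" if "c \<in> chain_family n k" for c
    using admissible_card_Int_chain_le[OF A chain_family_is_chain[OF that] chain_family_length_le[OF that]]
      w_pos[OF that] by simp
  then have "\<forall>c\<in>chain_family n k. ?slack c = 0"
    using sum_nonneg_eq_0_iff[OF finite_chain_family[of n k], of ?slack] sum_zero by blast
  then show ?thesis
    using w_pos unfolding transversal_def by (metis less_irrefl mult_eq_0_iff of_nat_eq_1_iff right_minus_eq)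
qed

theorem maximum_admissible_sets:
  assumes k: "1 \<le> k" "k \<le> n" and u: "n div 2 \<le> u" "u \<le> (n + 1) div 2"
  shows "admissible n k (residue_layers n (k + 1) (u mod (k + 1)))"
    and "admissible n k A \<Longrightarrow> card A \<le> card (residue_layers n (k + 1) (u mod (k + 1)))"
    and "admissible n k A \<Longrightarrow> card A = card (residue_layers n (k + 1) (u mod (k + 1)))
           \<Longrightarrow> A = residue_layers n (k + 1) (n div 2 mod (k + 1))
             \<or> A = residue_layers n (k + 1) ((n + 1) div 2 mod (k + 1))"
proof -
  let ?B = "residue_layers n (k + 1) (u mod (k + 1))"
  show "admissible n k ?B"
    by (rule residue_layers_admissible)
  have B: "real (card ?B) = w_total"
    using residue_layers_transversal[OF u] by (rule transversal_card) (auto simp: residue_layers_def)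
  show "card A \<le> card ?B" if "admissible n k A"
    using admissible_card_le[OF that] B by simp
  assume A: "admissible n k A" "card A = card ?B"
  then have "transversal A (chain_family n k)"
    using B transversal_if_admissible_card_eq by simp
  moreover have "A \<subseteq> cube n"
    using A by (simp add: admissible_def)
  ultimately obtain r where r: "A = residue_layers n (k + 1) r"
    using transversal_eq_residue_layers k by blast
  then obtain u' where "n div 2 \<le> u'" "u' \<le> (n + 1) div 2" "r = u' mod (k + 1)"
    using residue_of_transversal_residue_layers[OF k(1)] \<open>transversal A _\<close> by blast
  then have "u' = n div 2 \<or> u' = (n + 1) div 2"
    using succ_div_two_le[of n] by linarith
  then show "A = residue_layers n (k + 1) (n div 2 mod (k + 1))
      \<or> A = residue_layers n (k + 1) ((n + 1) div 2 mod (k + 1))"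
    using r \<open>r = u' mod (k + 1)\<close> by blast
qed

end

theorem lemma3p4:
  fixes n k :: nat
  assumes "1 \<le> k" and "k \<le> n"
    and "\<exists>w :: bool list list \<Rightarrow> real.
           (\<forall>c\<in>chain_family n k. w c > 0) \<and>
           (\<forall>x\<in>cube n. (\<Sum>c\<in>{c\<in>chain_family n k. x \<in> set c}. w c) = 1)"
  shows "(even n \<longrightarrow>
            (let B = {x\<in>cube n. weight x mod (k + 1) = (n div 2) mod (k + 1)} in
              admissible n k B \<and>
              (\<forall>A. admissible n k A \<longrightarrow> card A \<le> card B) \<and>
              (\<forall>A. admissible n k A \<and> card A = card B \<longrightarrow> A = B)))
       \<and> (odd n \<longrightarrow>
            (let B1 = {x\<in>cube n. weight x mod (k + 1) = (n div 2) mod (k + 1)};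
                 B2 = {x\<in>cube n. weight x mod (k + 1) = (n div 2 + 1) mod (k + 1)} in
              admissible n k B1 \<and> admissible n k B2 \<and>
              (\<forall>A. admissible n k A \<longrightarrow> card A \<le> card B1 \<and> card A \<le> card B2) \<and>
              (\<forall>A. admissible n k A \<and> (card A = card B1 \<or> card A = card B2)
                     \<longrightarrow> A = B1 \<or> A = B2)))"
proof -
  obtain w :: "bool list list \<Rightarrow> real" where "\<forall>c\<in>chain_family n k. w c > 0"
      "\<forall>x\<in>cube n. (\<Sum>c\<in>{c\<in>chain_family n k. x \<in> set c}. w c) = 1"
    using assms(3) by blast
  then interpret fractional_chain_partition n k w
    by unfold_locales auto
  have layers: "{x\<in>cube n. weight x mod (k + 1) = u mod (k + 1)} = residue_layers n (k + 1) (u mod (k + 1))"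
    for u by (simp add: residue_layers_def)
  have mid: "n div 2 \<le> (n + 1) div 2"
    by simp
  note lower = maximum_admissible_sets[OF assms(1,2) order.refl mid]
    and upper = maximum_admissible_sets[OF assms(1,2) mid order.refl]
  show ?thesis
  proof (cases "even n")
    case True
    then show ?thesis
      unfolding Let_def layers using lower[unfolded even_succ_div_two[OF True]] by blast
  next
    case False
    then show ?thesis
      unfolding Let_def layers using lower[unfolded odd_succ_div_two[OF False]]
        upper[unfolded odd_succ_div_two[OF False]] by blast
  qed
qed

end
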